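(* Let $(G,k)$ be an instance of \textsc{Paw-free Edge Editing} with $k>0$ such that there is no independent set of $k+3$ vertices of $G$ all having the same neighborhood, and let $S$ be the set of vertices covered by a maximal (under inclusion) collection of pairwise edge-disjoint induced paws in $G$. If a vertex $x\in V(G)$ has at least $4k+6$ neighbors belonging to triangle-free connected components of $G-S$, then there is no solution $A$ of $(G,k)$ such that $x$ belongs to a connected component of $G\Delta A$ that is a complete multipartite graph.
   Context: The paw is the graph on four vertices $x_1,x_2,x_3,x_4$ with edges $x_1x_2,x_2x_3,x_1x_3,x_3x_4$; a graph is paw-free if it has no induced paw. For a set $A$ of unordered vertex pairs, $G\Delta A$ is the graph on $V(G)$ with edge set the symmetric difference of $E(G)$ and $A$. A solution of $(G,k)$ is a set $A$ of at most $k$ vertex pairs such that $G\Delta A$ is paw-free. A complete multipartite graph here means one with at least three nonempty parts (independent sets) and all edges between different parts. Neighborhoods are open neighborhoods. *)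

theory Defs
  imports Main
begin

definition graph :: "'a set \<Rightarrow> 'a set set \<Rightarrow> bool" where
  "graph V E \<longleftrightarrow> finite V \<and> (\<forall>e\<in>E. e \<subseteq> V \<and> card e = 2)"

definition adj :: "'a set set \<Rightarrow> 'a \<Rightarrow> 'a \<Rightarrow> bool" where
  "adj E u v \<longleftrightarrow> u \<noteq> v \<and> {u, v} \<in> E"

definition nbhd :: "'a set set \<Rightarrow> 'a \<Rightarrow> 'a set" where
  "nbhd E v = {u. adj E v u}"

definition is_induced_paw :: "'a set \<Rightarrow> 'a set set \<Rightarrow> 'a \<Rightarrow> 'a \<Rightarrow> 'a \<Rightarrow> 'a \<Rightarrow> bool" where
  "is_induced_paw V E x1 x2 x3 x4 \<longleftrightarrow>
     x1 \<in> V \<and> x2 \<in> V \<and> x3 \<in> V \<and> x4 \<in> V \<and>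
     distinct [x1, x2, x3, x4] \<and>
     adj E x1 x2 \<and> adj E x2 x3 \<and> adj E x1 x3 \<and> adj E x3 x4 \<and>
     \<not> adj E x1 x4 \<and> \<not> adj E x2 x4"

definition paw_free :: "'a set \<Rightarrow> 'a set set \<Rightarrow> bool" where
  "paw_free V E \<longleftrightarrow> \<not> (\<exists>x1 x2 x3 x4. is_induced_paw V E x1 x2 x3 x4)"

definition induced_paw_edges :: "'a set \<Rightarrow> 'a set set \<Rightarrow> 'a set set \<Rightarrow> bool" where
  "induced_paw_edges V E P \<longleftrightarrow> (\<exists>x1 x2 x3 x4. is_induced_paw V E x1 x2 x3 x4 \<and>
      P = {{x1, x2}, {x2, x3}, {x1, x3}, {x3, x4}})"

definition maximal_edge_disjoint_paws :: "'a set \<Rightarrow> 'a set set \<Rightarrow> 'a set set set \<Rightarrow> bool" where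
  "maximal_edge_disjoint_paws V E \<P> \<longleftrightarrow>
     (\<forall>P\<in>\<P>. induced_paw_edges V E P) \<and>
     (\<forall>P\<in>\<P>. \<forall>Q\<in>\<P>. P \<noteq> Q \<longrightarrow> P \<inter> Q = {}) \<and>
     (\<forall>Q. induced_paw_edges V E Q \<and> (\<forall>P\<in>\<P>. P \<inter> Q = {}) \<longrightarrow> Q \<in> \<P>)"

definition covered_vertices :: "'a set set set \<Rightarrow> 'a set" where
  "covered_vertices \<P> = \<Union>(\<Union>\<P>)"

definition vpairs :: "'a set \<Rightarrow> 'a set set" where
  "vpairs V = {{u, v} | u v. u \<in> V \<and> v \<in> V \<and> u \<noteq> v}"

definition is_solution :: "'a set \<Rightarrow> 'a set set \<Rightarrow> nat \<Rightarrow> 'a set set \<Rightarrow> bool" where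
  "is_solution V E k A \<longleftrightarrow> A \<subseteq> vpairs V \<and> card A \<le> k \<and> paw_free V ((E - A) \<union> (A - E))"

definition component :: "'a set \<Rightarrow> 'a set set \<Rightarrow> 'a \<Rightarrow> 'a set" where
  "component W E v = {u \<in> W. (\<lambda>a b. a \<in> W \<and> b \<in> W \<and> adj E a b)\<^sup>*\<^sup>* v u}"

definition triangle_free_on :: "'a set \<Rightarrow> 'a set set \<Rightarrow> bool" where
  "triangle_free_on C E \<longleftrightarrow>
     \<not> (\<exists>a\<in>C. \<exists>b\<in>C. \<exists>c\<in>C. adj E a b \<and> adj E b c \<and> adj E a c)"

definition independent_on :: "'a set \<Rightarrow> 'a set set \<Rightarrow> bool" where
  "independent_on I E \<longleftrightarrow> (\<forall>a\<in>I. \<forall>b\<in>I. \<not> adj E a b)"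

definition complete_multipartite_on :: "'a set \<Rightarrow> 'a set set \<Rightarrow> bool" where
  "complete_multipartite_on C E \<longleftrightarrow>
     (\<exists>\<Q>. \<Union>\<Q> = C \<and> {} \<notin> \<Q> \<and> (\<forall>P\<in>\<Q>. \<forall>Q\<in>\<Q>. P \<noteq> Q \<longrightarrow> P \<inter> Q = {}) \<and>
          finite \<Q> \<and> card \<Q> \<ge> 3 \<and>
          (\<forall>P\<in>\<Q>. independent_on P E) \<and>
          (\<forall>P\<in>\<Q>. \<forall>Q\<in>\<Q>. P \<noteq> Q \<longrightarrow> (\<forall>a\<in>P. \<forall>b\<in>Q. adj E a b)))"

end

theory Submission
  imports Defs
begin

text \<open>The edit set A touches at most 2k vertices, so at least 2k + 6 neighbours of x lying in
triangle-free components of G - S are untouched, and all of them lie in the complete multipartite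
component of x in G \<Delta> A. If three of them fall into pairwise different parts, they form a triangle
of G \<Delta> A, hence of G, inside a triangle-free component of G - S. Otherwise some part contains
k + 3 of them; being untouched, they are pairwise non-adjacent in G and have equal neighbourhoods,
which the hypothesis excludes. The argument works for any vertex set S.\<close>

lemma adj_commute: "adj E u v \<longleftrightarrow> adj E v u"
  unfolding adj_def by (auto simp: insert_commute)

lemma adj_sym_diff_untouched:
  assumes "u \<notin> \<Union>A"
  shows "adj ((E - A) \<union> (A - E)) u v \<longleftrightarrow> adj E u v"
proof -
  have "{u, v} \<notin> A" using assms by blast
  then show ?thesis unfolding adj_def by blast
qed

lemma nbhd_sym_diff_untouched:
  assumes "u \<notin> \<Union>A"
  shows "nbhd ((E - A) \<union> (A - E)) u = nbhd E u"
  unfolding nbhd_def using adj_sym_diff_untouched[OF assms] by presburger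

lemma nbhd_sym_diff_subset_vertices:
  assumes "graph V E" and "A \<subseteq> vpairs V"
  shows "nbhd ((E - A) \<union> (A - E)) u \<subseteq> V"
proof
  fix v assume "v \<in> nbhd ((E - A) \<union> (A - E)) u"
  then have "{u, v} \<in> E \<union> A" unfolding nbhd_def adj_def by blast
  moreover have "\<Union>(E \<union> A) \<subseteq> V"
    using assms unfolding graph_def vpairs_def by blast
  ultimately show "v \<in> V" by blast
qed

lemma card_Union_le_twice_card:
  assumes "\<And>e. e \<in> A \<Longrightarrow> card e \<le> 2"
  shows "card (\<Union>A) \<le> 2 * card A"
proof -
  have "card (\<Union>A) \<le> sum card A" by (rule card_Union_le_sum_card)
  also have "\<dots> \<le> card A * 2" using sum_bounded_above[of A card 2] assms by simp
  finally show ?thesis by simp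
qed

lemma self_in_component: "v \<in> W \<Longrightarrow> v \<in> component W E v"
  unfolding component_def by simp

lemma component_adj_closed:
  assumes "u \<in> component W E v" and "w \<in> W" and "adj E u w"
  shows "w \<in> component W E v"
  using assms unfolding component_def by (auto intro: rtranclp.rtrancl_into_rtrancl)

lemma nbhd_component_subset:
  "nbhd E u \<subseteq> W \<Longrightarrow> u \<in> component W E v \<Longrightarrow> nbhd E u \<subseteq> component W E v"
  unfolding nbhd_def by (auto intro: component_adj_closed)

lemma triangle_in_component:
  assumes "a \<in> W" "b \<in> W" "c \<in> W" and "adj E a b" "adj E b c" "adj E a c"
  shows "\<not> triangle_free_on (component W E a) E"
proof -
  have a: "a \<in> component W E a" using \<open>a \<in> W\<close> by (rule self_in_component)
  have b: "b \<in> component W E a" using component_adj_closed[OF a \<open>b \<in> W\<close> \<open>adj E a b\<close>] .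
  have c: "c \<in> component W E a" using component_adj_closed[OF a \<open>c \<in> W\<close> \<open>adj E a c\<close>] .
  show ?thesis
    unfolding triangle_free_on_def using a b c \<open>adj E a b\<close> \<open>adj E b c\<close> \<open>adj E a c\<close> by blast
qed

lemma card_Diff_Union_vpairs:
  assumes "finite V" and "A \<subseteq> vpairs V"
  shows "card N - 2 * card A \<le> card (N - \<Union>A)"
proof -
  have "\<Union>A \<subseteq> V" using assms(2) unfolding vpairs_def by blast
  then have "card N - card (\<Union>A) \<le> card (N - \<Union>A)"
    using \<open>finite V\<close> by (blast intro: diff_card_le_card_Diff finite_subset)
  moreover have "card (\<Union>A) \<le> 2 * card A"
    using assms(2) by (intro card_Union_le_twice_card) (auto simp: vpairs_def)
  ultimately show ?thesis by arith
qed

lemma component_sym_diff_closed: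
  assumes "graph V E" and "A \<subseteq> vpairs V" and "u \<in> component V ((E - A) \<union> (A - E)) x"
  shows "nbhd ((E - A) \<union> (A - E)) u \<subseteq> component V ((E - A) \<union> (A - E)) x"
  using nbhd_component_subset[OF nbhd_sym_diff_subset_vertices[OF assms(1,2)] assms(3)] .

lemma untouched_nbhd_subset_component:
  assumes "graph V E" and "A \<subseteq> vpairs V" and "x \<in> V"
  shows "nbhd E x - \<Union>A \<subseteq> component V ((E - A) \<union> (A - E)) x"
proof
  fix u assume "u \<in> nbhd E x - \<Union>A"
  then have "adj ((E - A) \<union> (A - E)) u x"
    using adj_sym_diff_untouched[of u A E x] adj_commute[of E x u] unfolding nbhd_def by blast
  then have "u \<in> nbhd ((E - A) \<union> (A - E)) x"
    using adj_commute[of "(E - A) \<union> (A - E)" x u] unfolding nbhd_def by blast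
  then show "u \<in> component V ((E - A) \<union> (A - E)) x"
    using component_sym_diff_closed[OF assms(1,2) self_in_component[OF assms(3)]] by blast
qed

lemma pigeonhole_three_classes:
  assumes "finite U" and "U \<subseteq> \<Union>Q"
    and small: "\<And>P. P \<in> Q \<Longrightarrow> card (U \<inter> P) \<le> m" and "2 * m < card U"
  obtains P0 P1 P2 u0 u1 u2
  where "P0 \<in> Q" "P1 \<in> Q" "P2 \<in> Q" "P0 \<noteq> P1" "P0 \<noteq> P2" "P1 \<noteq> P2"
    and "u0 \<in> U \<inter> P0" "u1 \<in> U \<inter> P1" "u2 \<in> U \<inter> P2"
proof -
  have outside: "card U - card (U \<inter> X) \<le> card (U - X)" for X
    using \<open>finite U\<close> by (simp add: card_Diff_subset_Int)
  have "U \<noteq> {}" using \<open>2 * m < card U\<close> by auto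
  then obtain u0 P0 where P0: "P0 \<in> Q" "u0 \<in> U \<inter> P0" using \<open>U \<subseteq> \<Union>Q\<close> by blast
  have "card (U - P0) \<noteq> 0"
    using outside[of P0] small[OF \<open>P0 \<in> Q\<close>] \<open>2 * m < card U\<close> by linarith
  then obtain u1 where "u1 \<in> U - P0" by (metis all_not_in_conv card.empty)
  then obtain P1 where P1: "P1 \<in> Q" "u1 \<in> U \<inter> P1" "P0 \<noteq> P1" using \<open>U \<subseteq> \<Union>Q\<close> by blast
  have "card (U \<inter> (P0 \<union> P1)) \<le> card (U \<inter> P0) + card (U \<inter> P1)"
    by (metis Int_Un_distrib card_Un_le)
  then have "card (U - (P0 \<union> P1)) \<noteq> 0"
    using outside[of "P0 \<union> P1"] small[OF \<open>P0 \<in> Q\<close>] small[OF \<open>P1 \<in> Q\<close>] \<open>2 * m < card U\<close>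
    by linarith
  then obtain u2 where "u2 \<in> U - (P0 \<union> P1)" by (metis all_not_in_conv card.empty)
  then obtain P2 where P2: "P2 \<in> Q" "u2 \<in> U \<inter> P2" "P0 \<noteq> P2" "P1 \<noteq> P2"
    using \<open>U \<subseteq> \<Union>Q\<close> by blast
  show ?thesis by (rule that[OF P0(1) P1(1) P2(1) P1(3) P2(3,4) P0(2) P1(2) P2(2)])
qed

text \<open>Closedness of C under neighbourhoods (true for a connected component) is what makes
each part a class of vertices with equal neighbourhoods.\<close>

lemma complete_multipartite_on_triangle_or_twins:
  assumes "complete_multipartite_on C H" and closed: "\<And>u. u \<in> C \<Longrightarrow> nbhd H u \<subseteq> C"
    and "U \<subseteq> C" "finite U" "2 * m < card U"
  obtains a b c where "a \<in> U" "b \<in> U" "c \<in> U" "adj H a b" "adj H b c" "adj H a c"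
  | I where "I \<subseteq> U" "card I = Suc m" "independent_on I H" "\<forall>u\<in>I. \<forall>v\<in>I. nbhd H u = nbhd H v"
proof -
  obtain Q where cover: "\<Union>Q = C" and indep: "\<forall>P\<in>Q. independent_on P H"
    and across: "\<forall>P\<in>Q. \<forall>P'\<in>Q. P \<noteq> P' \<longrightarrow> (\<forall>a\<in>P. \<forall>b\<in>P'. adj H a b)"
    using \<open>complete_multipartite_on C H\<close> unfolding complete_multipartite_on_def
    by (elim exE conjE) blast
  have nbhd_mono: "nbhd H u \<subseteq> nbhd H u'" if "P \<in> Q" "u \<in> P" "u' \<in> P" for P u u'
  proof
    fix v assume "v \<in> nbhd H u"
    then have "adj H u v" "v \<in> C"
      using closed[of u] cover \<open>P \<in> Q\<close> \<open>u \<in> P\<close> unfolding nbhd_def by auto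
    moreover obtain P' where "P' \<in> Q" "v \<in> P'" using \<open>v \<in> C\<close> cover by blast
    moreover have "v \<notin> P"
      using indep \<open>P \<in> Q\<close> \<open>u \<in> P\<close> \<open>adj H u v\<close> unfolding independent_on_def by blast
    ultimately have "adj H u' v" using across \<open>P \<in> Q\<close> \<open>u' \<in> P\<close> by metis
    then show "v \<in> nbhd H u'" unfolding nbhd_def by simp
  qed
  show ?thesis
  proof (cases "\<exists>P\<in>Q. Suc m \<le> card (U \<inter> P)")
    case True
    then obtain P I where "P \<in> Q" and I: "I \<subseteq> U \<inter> P" "card I = Suc m"
      by (meson obtain_subset_with_card_n)
    have "independent_on I H"
      using indep \<open>P \<in> Q\<close> I(1) unfolding independent_on_def by blast
    moreover have "\<forall>u\<in>I. \<forall>v\<in>I. nbhd H u = nbhd H v"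
      using nbhd_mono[OF \<open>P \<in> Q\<close>] I(1) by (blast intro: subset_antisym)
    ultimately show ?thesis using that(2) I by blast
  next
    case False
    then have small: "\<And>P. P \<in> Q \<Longrightarrow> card (U \<inter> P) \<le> m" by fastforce
    have "U \<subseteq> \<Union>Q" using cover \<open>U \<subseteq> C\<close> by simp
    then obtain P0 P1 P2 u0 u1 u2
      where "P0 \<in> Q" "P1 \<in> Q" "P2 \<in> Q" "P0 \<noteq> P1" "P0 \<noteq> P2" "P1 \<noteq> P2"
        and "u0 \<in> U \<inter> P0" "u1 \<in> U \<inter> P1" "u2 \<in> U \<inter> P2"
      using pigeonhole_three_classes \<open>finite U\<close> small \<open>2 * m < card U\<close> by metis
    then have "adj H u0 u1" "adj H u1 u2" "adj H u0 u2" using across by blast+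
    then show ?thesis using that(1) \<open>u0 \<in> U \<inter> P0\<close> \<open>u1 \<in> U \<inter> P1\<close> \<open>u2 \<in> U \<inter> P2\<close> by blast
  qed
qed

lemma sym_diff_component_triangle_or_twins:
  assumes "graph V E" and "A \<subseteq> vpairs V" and "x \<in> V"
    and "complete_multipartite_on (component V ((E - A) \<union> (A - E)) x) ((E - A) \<union> (A - E))"
    and "U \<subseteq> nbhd E x - \<Union>A" "finite U" "2 * m < card U"
  obtains a b c where "a \<in> U" "b \<in> U" "c \<in> U" "adj E a b" "adj E b c" "adj E a c"
  | I where "I \<subseteq> U" "card I = Suc m" "independent_on I E" "\<forall>u\<in>I. \<forall>v\<in>I. nbhd E u = nbhd E v"
proof -
  define H where "H = (E - A) \<union> (A - E)"
  have adj_H: "adj H u v \<longleftrightarrow> adj E u v" and nbhd_H: "nbhd H u = nbhd E u" if "u \<in> U" for u v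
    using adj_sym_diff_untouched[of u A E v] nbhd_sym_diff_untouched[of u A E]
      that \<open>U \<subseteq> nbhd E x - \<Union>A\<close>
    unfolding H_def by blast+
  have "U \<subseteq> component V H x"
    using untouched_nbhd_subset_component[OF assms(1-3)] \<open>U \<subseteq> nbhd E x - \<Union>A\<close>
    unfolding H_def by blast
  show ?thesis
  proof (rule complete_multipartite_on_triangle_or_twins[of "component V H x" H U m])
    show "complete_multipartite_on (component V H x) H" using assms(4) unfolding H_def .
    show "nbhd H u \<subseteq> component V H x" if "u \<in> component V H x" for u
      using component_sym_diff_closed[OF assms(1,2)] that unfolding H_def .
  next
    fix a b c assume "a \<in> U" "b \<in> U" "c \<in> U" "adj H a b" "adj H b c" "adj H a c"
    then show ?thesis using that(1) adj_H by blast
  next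
    fix I assume "I \<subseteq> U" "card I = Suc m" "independent_on I H" "\<forall>u\<in>I. \<forall>v\<in>I. nbhd H u = nbhd H v"
    moreover have "independent_on I E"
      using \<open>independent_on I H\<close> \<open>I \<subseteq> U\<close> adj_H unfolding independent_on_def by blast
    moreover have "\<forall>u\<in>I. \<forall>v\<in>I. nbhd E u = nbhd E v"
      using \<open>\<forall>u\<in>I. \<forall>v\<in>I. nbhd H u = nbhd H v\<close> \<open>I \<subseteq> U\<close> nbhd_H by (metis subsetD)
    ultimately show ?thesis using that(2) by blast
  qed (use assms(5-7) \<open>U \<subseteq> component V H x\<close> in auto)
qed

theorem lemma7:
  fixes V :: "'a set" and E :: "'a set set" and k :: nat
    and \<P> :: "'a set set set" and x :: 'a
  assumes "graph V E"
    and "k > 0"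
    and "\<not> (\<exists>I. I \<subseteq> V \<and> card I = k + 3 \<and> independent_on I E \<and>
                 (\<forall>u\<in>I. \<forall>v\<in>I. nbhd E u = nbhd E v))"
    and "maximal_edge_disjoint_paws V E \<P>"
    and "S = covered_vertices \<P>"
    and "x \<in> V"
    and "card {y. adj E x y \<and> y \<in> V - S \<and>
                  triangle_free_on (component (V - S) E y) E} \<ge> 4 * k + 6"
  shows "\<not> (\<exists>A. is_solution V E k A \<and>
               complete_multipartite_on (component V ((E - A) \<union> (A - E)) x) ((E - A) \<union> (A - E)))"
proof
  assume "\<exists>A. is_solution V E k A \<and>
    complete_multipartite_on (component V ((E - A) \<union> (A - E)) x) ((E - A) \<union> (A - E))"
  then obtain A where A: "A \<subseteq> vpairs V" "card A \<le> k"
    and multipartite: "complete_multipartite_on (component V ((E - A) \<union> (A - E)) x) ((E - A) \<union> (A - E))"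
    unfolding is_solution_def by blast
  define N where "N = {y. adj E x y \<and> y \<in> V - S \<and> triangle_free_on (component (V - S) E y) E}"
  define U where "U = N - \<Union>A"
  have "finite V" using \<open>graph V E\<close> unfolding graph_def by blast
  have "finite U" using \<open>finite V\<close> unfolding U_def N_def by (auto intro: finite_subset)
  have "U \<subseteq> nbhd E x - \<Union>A" unfolding U_def N_def nbhd_def by blast
  have "4 * k + 6 \<le> card N" using assms(7) unfolding N_def .
  then have "2 * (k + 2) < card U"
    using card_Diff_Union_vpairs[OF \<open>finite V\<close> A(1), of N] A(2) unfolding U_def by arith
  then show False
  proof (rule sym_diff_component_triangle_or_twins
      [OF \<open>graph V E\<close> A(1) \<open>x \<in> V\<close> multipartite \<open>U \<subseteq> nbhd E x - \<Union>A\<close> \<open>finite U\<close>])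
    fix a b c assume "a \<in> U" "b \<in> U" "c \<in> U" and triangle: "adj E a b" "adj E b c" "adj E a c"
    then have "a \<in> V - S" "b \<in> V - S" "c \<in> V - S" by (auto simp: U_def N_def)
    then have "\<not> triangle_free_on (component (V - S) E a) E"
      using triangle by (rule triangle_in_component)
    then show False using \<open>a \<in> U\<close> unfolding U_def N_def by blast
  next
    fix I assume "I \<subseteq> U" "card I = Suc (k + 2)" "independent_on I E"
      "\<forall>u\<in>I. \<forall>v\<in>I. nbhd E u = nbhd E v"
    moreover have "I \<subseteq> V" using \<open>I \<subseteq> U\<close> unfolding U_def N_def by blast
    moreover have "card I = k + 3" using \<open>card I = Suc (k + 2)\<close> by simp
    ultimately show False using assms(3) by blast
  qed
qed

end
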